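(* Let $\mu:\mathbb{N}\to\mathbb{R}$ with increments $\gamma(n)=\mu(n+1)-\mu(n)$ satisfying $\gamma(n)\ge0$ and $\gamma(n+1)\le\gamma(n)$ for all $n\in\mathbb{N}$. Let $T,N,h$ be integers with $N\ge2$, $N\le T-1$ and $1\le h\le\lfloor N/2\rfloor$, and define $$\widetilde\mu^T=\frac1h\sum_{l=N-h+1}^{N}\Big(\mu(l)+(T-l)\frac{\mu(l)-\mu(l-h)}{h}\Big).$$ Then $\widetilde\mu^T\ge\mu(T)$ and $$\widetilde\mu^T-\mu(T)\le\frac12(2T-2N+h-1)\,\gamma(N-2h+1).$$
   Context: In the paper $\mu$ is the expected-reward function of an arm (indexed by number of pulls), $N$ is the number of pulls of the arm before some round $t\le T$, and $h$ is the window width. *)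

theory Defs
  imports Complex_Main
begin

definition gamma_incr :: "(nat \<Rightarrow> real) \<Rightarrow> nat \<Rightarrow> real" where
  "gamma_incr \<mu> n = \<mu> (n + 1) - \<mu> n"

definition mu_tilde :: "(nat \<Rightarrow> real) \<Rightarrow> nat \<Rightarrow> nat \<Rightarrow> nat \<Rightarrow> real" where
  "mu_tilde \<mu> T N h =
     (1 / real h) * (\<Sum>l = N - h + 1..N.
        \<mu> l + (real T - real l) * ((\<mu> l - \<mu> (l - h)) / real h))"

end

theory Submission
  imports Defs
begin

text \<open>
  Non-increasing increments make every secant slope of \<open>\<mu>\<close> lie between the increments at
  its endpoints. Each summand \<open>\<mu>(l) + (T - l) (\<mu>(l) - \<mu>(l - h)) / h\<close> of \<open>mu_tilde\<close>
  extrapolates \<open>\<mu>\<close> linearly from \<open>l\<close> to \<open>T\<close> with a backward secant slope, so it lies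
  above \<open>\<mu>(T)\<close> and exceeds it by at most \<open>(T - l) \<gamma>(l - h)\<close>. As \<open>l - h \<ge> N - 2h + 1\<close>,
  averaging over the window \<open>N - h < l \<le> N\<close> and summing the arithmetic progression
  \<open>T - l\<close> gives the bound.
\<close>

lemma increment_sum:
  "a \<le> b \<Longrightarrow> \<mu> b - \<mu> a = (\<Sum>k = a..<b. gamma_incr \<mu> k)"
  by (simp add: gamma_incr_def sum_Suc_diff')

lemma gamma_incr_antimono:
  assumes "\<And>n. gamma_incr \<mu> (n + 1) \<le> gamma_incr \<mu> n" and "m \<le> n"
  shows "gamma_incr \<mu> n \<le> gamma_incr \<mu> m"
  using lift_Suc_antimono_le[of "gamma_incr \<mu>"] assms by simp

lemma secant_bounds:
  assumes dec: "\<And>n. gamma_incr \<mu> (n + 1) \<le> gamma_incr \<mu> n" and "a \<le> b"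
  shows "real (b - a) * gamma_incr \<mu> b \<le> \<mu> b - \<mu> a"
    and "\<mu> b - \<mu> a \<le> real (b - a) * gamma_incr \<mu> a"
proof -
  have "(\<Sum>k = a..<b. gamma_incr \<mu> b) \<le> (\<Sum>k = a..<b. gamma_incr \<mu> k)"
    by (intro sum_mono gamma_incr_antimono[OF dec]) auto
  then show "real (b - a) * gamma_incr \<mu> b \<le> \<mu> b - \<mu> a"
    using increment_sum[OF \<open>a \<le> b\<close>] by simp
  have "(\<Sum>k = a..<b. gamma_incr \<mu> k) \<le> (\<Sum>k = a..<b. gamma_incr \<mu> a)"
    by (intro sum_mono gamma_incr_antimono[OF dec]) auto
  then show "\<mu> b - \<mu> a \<le> real (b - a) * gamma_incr \<mu> a"
    using increment_sum[OF \<open>a \<le> b\<close>] by simp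
qed

definition window_term :: "(nat \<Rightarrow> real) \<Rightarrow> nat \<Rightarrow> nat \<Rightarrow> nat \<Rightarrow> real" where
  "window_term \<mu> T h l = \<mu> l + (real T - real l) * ((\<mu> l - \<mu> (l - h)) / real h)"

lemma mu_tilde_eq_window_mean:
  "mu_tilde \<mu> T N h = (\<Sum>l = N - h + 1..N. window_term \<mu> T h l) / real h"
  by (simp add: mu_tilde_def window_term_def)

lemma window_term_bounds:
  assumes nonneg: "\<And>n. gamma_incr \<mu> n \<ge> 0"
    and dec: "\<And>n. gamma_incr \<mu> (n + 1) \<le> gamma_incr \<mu> n"
    and "0 < h" "h \<le> l" "l \<le> T"
  shows "\<mu> T \<le> window_term \<mu> T h l"
    and "window_term \<mu> T h l - \<mu> T \<le> (real T - real l) * gamma_incr \<mu> (l - h)"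
proof -
  define s where "s = (\<mu> l - \<mu> (l - h)) / real h"
  have "real h * gamma_incr \<mu> l \<le> \<mu> l - \<mu> (l - h)"
    and "\<mu> l - \<mu> (l - h) \<le> real h * gamma_incr \<mu> (l - h)"
    using secant_bounds[OF dec, of "l - h" l] \<open>h \<le> l\<close> by simp_all
  then have "gamma_incr \<mu> l \<le> s" and "s \<le> gamma_incr \<mu> (l - h)"
    using \<open>0 < h\<close> by (simp_all add: s_def pos_le_divide_eq pos_divide_le_eq mult.commute)
  then have "(real T - real l) * gamma_incr \<mu> l \<le> (real T - real l) * s"
    and "(real T - real l) * s \<le> (real T - real l) * gamma_incr \<mu> (l - h)"
    using \<open>l \<le> T\<close> by (simp_all add: mult_left_mono)
  moreover have "\<mu> T - \<mu> l \<le> (real T - real l) * gamma_incr \<mu> l"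
    using secant_bounds(2)[OF dec \<open>l \<le> T\<close>] \<open>l \<le> T\<close> by (simp add: of_nat_diff)
  moreover have "0 \<le> \<mu> T - \<mu> l"
    using secant_bounds(1)[OF dec \<open>l \<le> T\<close>] nonneg[of T] 
    by (meson mult_nonneg_nonneg of_nat_0_le_iff order_trans)
  moreover have "window_term \<mu> T h l = \<mu> l + (real T - real l) * s"
    by (simp add: window_term_def s_def)
  ultimately show "\<mu> T \<le> window_term \<mu> T h l"
    and "window_term \<mu> T h l - \<mu> T \<le> (real T - real l) * gamma_incr \<mu> (l - h)"
    by linarith+
qed

lemma sum_window_distances:
  assumes "h \<le> N"
  shows "(\<Sum>l = N - h + 1..N. real T - real l)
    = real h * (2 * real T - 2 * real N + real h - 1) / 2"
  using assms
proof (induction h)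
  case 0
  then show ?case by simp
next
  case (Suc h)
  have "{N - Suc h + 1..N} = insert (N - h) {N - h + 1..N}"
    using Suc.prems by auto
  then have "(\<Sum>l = N - Suc h + 1..N. real T - real l)
      = (real T - real (N - h)) + (\<Sum>l = N - h + 1..N. real T - real l)"
    by simp
  then show ?case
    using Suc by (simp add: of_nat_diff field_simps)
qed

lemma mean_bounds:
  fixes f e :: "'a \<Rightarrow> real"
  assumes "finite A" "A \<noteq> {}"
    and "\<And>x. x \<in> A \<Longrightarrow> c \<le> f x" "\<And>x. x \<in> A \<Longrightarrow> f x - c \<le> e x"
  shows "c \<le> sum f A / card A" and "sum f A / card A - c \<le> sum e A / card A"
proof -
  have card_pos: "0 < real (card A)"
    using assms by (simp add: card_gt_0_iff)
  have "card A * c \<le> sum f A"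
    using sum_mono[of A "\<lambda>_. c" f] assms by simp
  then show "c \<le> sum f A / card A"
    using card_pos by (simp add: pos_le_divide_eq mult.commute)
  have "sum f A / card A - c = (sum f A - card A * c) / card A"
    using card_pos by (simp add: diff_divide_distrib)
  also have "\<dots> \<le> sum e A / card A"
    using sum_mono[of A "\<lambda>x. f x - c" e] assms card_pos
    by (simp add: sum_subtractf divide_right_mono)
  finally show "sum f A / card A - c \<le> sum e A / card A" .
qed

theorem lemma5:
  fixes \<mu> :: "nat \<Rightarrow> real" and T N h :: nat
  assumes "\<And>n. gamma_incr \<mu> n \<ge> 0"
    and "\<And>n. gamma_incr \<mu> (n + 1) \<le> gamma_incr \<mu> n"
    and "N \<ge> 2" and "N + 1 \<le> T"
    and "1 \<le> h" and "h \<le> N div 2"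
  shows "mu_tilde \<mu> T N h \<ge> \<mu> T \<and>
         mu_tilde \<mu> T N h - \<mu> T
           \<le> (1/2) * (2 * real T - 2 * real N + real h - 1) * gamma_incr \<mu> (N - 2 * h + 1)"
proof -
  let ?W = "{N - h + 1..N}" and ?G = "gamma_incr \<mu> (N - 2 * h + 1)"
  have "0 < h" and "h \<le> N" and card_W: "card ?W = h"
    using assms by auto
  have "\<mu> T \<le> window_term \<mu> T h l \<and> window_term \<mu> T h l - \<mu> T \<le> (real T - real l) * ?G"
    if "l \<in> ?W" for l
  proof -
    have "h \<le> l" "l \<le> T" "N - 2 * h + 1 \<le> l - h"
      using that assms by auto
    then have "(real T - real l) * gamma_incr \<mu> (l - h) \<le> (real T - real l) * ?G"
      by (simp add: mult_left_mono gamma_incr_antimono[OF assms(2)])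
    then show ?thesis
      using window_term_bounds[OF assms(1,2) \<open>0 < h\<close> \<open>h \<le> l\<close> \<open>l \<le> T\<close>] by linarith
  qed
  then have "\<mu> T \<le> mu_tilde \<mu> T N h"
    and "mu_tilde \<mu> T N h - \<mu> T \<le> (\<Sum>l\<in>?W. (real T - real l) * ?G) / real h"
    using mean_bounds[where A = ?W and c = "\<mu> T" and f = "window_term \<mu> T h"
        and e = "\<lambda>l. (real T - real l) * ?G"] card_W \<open>0 < h\<close>
    by (auto simp: mu_tilde_eq_window_mean)
  moreover have "(\<Sum>l\<in>?W. (real T - real l) * ?G) / real h
      = (1/2) * (2 * real T - 2 * real N + real h - 1) * ?G"
    using \<open>0 < h\<close>
    unfolding sum_distrib_right[symmetric] sum_window_distances[OF \<open>h \<le> N\<close>] by simp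
  ultimately show ?thesis
    by linarith
qed

end
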